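(* Let $C$ be a copula, and write $C_{2|1}(v|u)=\partial C(u,v)/\partial u$ and $C_{1|2}(u|v)=\partial C(u,v)/\partial v$. Provided the partial derivatives and limits appearing below exist, the following hold. For $p,q\in(0,1)$: $$\lambda^C(q|p)=\tfrac12\lim_{t\to0^+}\big[C_{2|1}(q+t|p+t)-C_{2|1}(q-t|p+t)+C_{2|1}(q+t|p-t)-C_{2|1}(q-t|p-t)+C_{1|2}(p+t|q+t)-C_{1|2}(p-t|q+t)+C_{1|2}(p+t|q-t)-C_{1|2}(p-t|q-t)\big].$$ For $p\in(0,1)$, $q=0$: $\lambda^C(0|p)=\tfrac12\lim_{t\to0^+}[C_{2|1}(t|p+t)+C_{2|1}(t|p-t)+C_{1|2}(p+t|t)-C_{1|2}(p-t|t)]$. For $p\in(0,1)$, $q=1$: $\lambda^C(1|p)=1-\tfrac12\lim_{t\to0^+}[C_{2|1}(1-t|p+t)+C_{2|1}(1-t|p-t)-C_{1|2}(p+t|1-t)+C_{1|2}(p-t|1-t)]$. For $p=0$, $q\in(0,1)$: $\lambda^C(q|0)=\lim_{t\to0^+}[C_{2|1}(q+t|t)-C_{2|1}(q-t|t)+C_{1|2}(t|q+t)+C_{1|2}(t|q-t)]$. For $p=1$, $q\in(0,1)$: $\lambda^C(q|1)=2-\lim_{t\to0^+}[C_{1|2}(1-t|q+t)+C_{1|2}(1-t|q-t)-C_{2|1}(q+t|1-t)+C_{2|1}(q-t|1-t)]$. For $p=0$, $q=1$: $\lambda^C(1|0)=1-\lim_{t\to0^+}[C_{2|1}(1-t|t)-C_{1|2}(t|1-t)]$.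 For $q=0$, $p=1$: $\lambda^C(0|1)=1-\lim_{t\to0^+}[C_{1|2}(1-t|t)-C_{2|1}(t|1-t)]$.
   Context: A copula is a bivariate distribution function on $[0,1]^2$ with uniform$(0,1)$ margins. For a copula $C$ and $p,q\in[0,1]$, the $(p,q)$-quantile dependence coefficient is $\lambda^C(q|p)=\lim_{t\to0^+}\frac{V_C([(p-t)^+,(p+t)^-]\times[(q-t)^+,(q+t)^-])}{(p+t)^- - (p-t)^+}$ when the limit exists, where $a^+=\max(a,0)$, $a^-=1-(1-a)^+$, and $V_C([u_1,u_2]\times[v_1,v_2])=C(u_2,v_2)-C(u_2,v_1)-C(u_1,v_2)+C(u_1,v_1)$. *)

theory Defs
  imports "HOL-Analysis.Analysis"
begin

text \<open>A copula, represented as a real function of two real arguments; only its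
values on the unit square matter.  Grounded, uniform margins, 2-increasing.\<close>
definition copula :: "(real \<Rightarrow> real \<Rightarrow> real) \<Rightarrow> bool" where
  "copula C \<longleftrightarrow>
     (\<forall>u\<in>{0..1}. C u 0 = 0 \<and> C 0 u = 0 \<and> C u 1 = u \<and> C 1 u = u) \<and>
     (\<forall>u1\<in>{0..1}. \<forall>u2\<in>{0..1}. \<forall>v1\<in>{0..1}. \<forall>v2\<in>{0..1}.
        u1 \<le> u2 \<longrightarrow> v1 \<le> v2 \<longrightarrow> C u2 v2 - C u2 v1 - C u1 v2 + C u1 v1 \<ge> 0)"

definition Cvol :: "(real \<Rightarrow> real \<Rightarrow> real) \<Rightarrow> real \<Rightarrow> real \<Rightarrow> real \<Rightarrow> real \<Rightarrow> real" where
  "Cvol C u1 u2 v1 v2 = C u2 v2 - C u2 v1 - C u1 v2 + C u1 v1"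

definition pospart :: "real \<Rightarrow> real" where "pospart a = max a 0"
definition negpart :: "real \<Rightarrow> real" where "negpart a = 1 - pospart (1 - a)"

definition qd_ratio :: "(real \<Rightarrow> real \<Rightarrow> real) \<Rightarrow> real \<Rightarrow> real \<Rightarrow> real \<Rightarrow> real" where
  "qd_ratio C q p t =
     Cvol C (pospart (p - t)) (negpart (p + t)) (pospart (q - t)) (negpart (q + t))
     / (negpart (p + t) - pospart (p - t))"

text \<open>lambda^C(q|p) exists and equals L.\<close>
definition qdc_is :: "(real \<Rightarrow> real \<Rightarrow> real) \<Rightarrow> real \<Rightarrow> real \<Rightarrow> real \<Rightarrow> bool" where
  "qdc_is C q p L \<longleftrightarrow> (qd_ratio C q p \<longlongrightarrow> L) (at_right 0)"

text \<open>C_{2|1}(v|u) = dC(u,v)/du and C_{1|2}(u|v) = dC(u,v)/dv.\<close>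
definition cd21 :: "(real \<Rightarrow> real \<Rightarrow> real) \<Rightarrow> real \<Rightarrow> real \<Rightarrow> real" where
  "cd21 C v u = deriv (\<lambda>x. C x v) u"
definition cd12 :: "(real \<Rightarrow> real \<Rightarrow> real) \<Rightarrow> real \<Rightarrow> real \<Rightarrow> real" where
  "cd12 C u v = deriv (\<lambda>y. C u y) v"

definition partials_exist :: "(real \<Rightarrow> real \<Rightarrow> real) \<Rightarrow> real \<Rightarrow> real \<Rightarrow> bool" where
  "partials_exist C u v \<longleftrightarrow>
     (\<lambda>x. C x v) differentiable (at u) \<and> (\<lambda>y. C u y) differentiable (at v)"

end

theory Submission
  imports Defs
begin

text \<open>For small \<open>t\<close> the ratio defining \<open>\<lambda>\<^sup>C(q|p)\<close> is an affine function of \<open>V(t)/t\<close>, where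
  \<open>V\<close> is a signed sum of values of \<open>C\<close> along diagonal segments issuing from \<open>(p, q)\<close>, e.g.
  \<open>V(t) = C(p+t, q+t) - C(p+t, q-t) - C(p-t, q+t) + C(p-t, q-t)\<close> in the interior.
  \<open>V\<close> need not be differentiable, but 2-increasingness of \<open>C\<close> together with the partial
  derivatives at the points of the segments bounds its right increments from below and its left
  increments from above by the sum of partial derivatives appearing in the statement.
  A Dini-type mean value argument (a continuous function whose lower right Dini derivative
  exceeds \<open>c\<close> on an interval grows there at least with slope \<open>c\<close>) then turns the limit of that
  sum into the limit of \<open>V(t)/t\<close>.\<close>

section \<open>Dini derivative bounds\<close>

lemma le_if_right_locally_nondecreasing:
  fixes f :: "real \<Rightarrow> real"
  assumes "a \<le> b" and cont: "continuous_on {a..b} f"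
    and loc: "\<forall>x\<in>{a..<b}. \<forall>\<^sub>F h in at_right 0. f x \<le> f (x + h)"
  shows "f a \<le> f b"
proof -
  define S where "S = {a..b} \<inter> f -` {f a..}"
  have "closed S" unfolding S_def
    by (rule continuous_closed_preimage[OF cont]) auto
  moreover have "a \<in> S" using \<open>a \<le> b\<close> by (auto simp: S_def)
  moreover have bdd: "bdd_above S" unfolding S_def by (auto intro: bdd_aboveI[where M=b])
  ultimately have mS: "Sup S \<in> S" using closed_contains_Sup by blast
  have "Sup S = b"
  proof (rule ccontr)
    assume "Sup S \<noteq> b"
    with mS have m: "a \<le> Sup S" "Sup S < b" by (auto simp: S_def)
    then have "\<forall>\<^sub>F h in at_right 0. f (Sup S) \<le> f (Sup S + h) \<and> 0 < h \<and> h < b - Sup S"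
      using loc eventually_at_right_real[of 0 "b - Sup S"]
      by (auto intro: eventually_conj simp: eventually_at_right_less)
    then obtain h where h: "f (Sup S) \<le> f (Sup S + h)" "0 < h" "h < b - Sup S"
      using eventually_happens' trivial_limit_at_right_real by blast
    then have "Sup S + h \<in> S" using mS m by (auto simp: S_def)
    then have "Sup S + h \<le> Sup S" by (rule cSup_upper[OF _ bdd])
    with \<open>0 < h\<close> show False by simp
  qed
  with mS show ?thesis by (auto simp: S_def)
qed

lemma slope_ge_if_right_increments_ge:
  fixes f :: "real \<Rightarrow> real"
  assumes "a < b" and cont: "continuous_on {a..b} f"
    and loc: "\<forall>x\<in>{a<..<b}. \<forall>\<^sub>F h in at_right 0. c * h \<le> f (x + h) - f x"
  shows "c * (b - a) \<le> f b - f a"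
proof -
  define g where "g x = f x - c * x" for x
  have cont_g: "continuous_on {a..b} g" unfolding g_def by (intro continuous_intros cont)
  have "g s \<le> g b" if "a < s" "s < b" for s
  proof (rule le_if_right_locally_nondecreasing[where f = g])
    show "continuous_on {s..b} g" by (rule continuous_on_subset[OF cont_g]) (use that in auto)
    show "\<forall>x\<in>{s..<b}. \<forall>\<^sub>F h in at_right 0. g x \<le> g (x + h)"
      using loc that by (auto elim!: eventually_mono simp: g_def algebra_simps)
  qed (use that in auto)
  then have "\<forall>\<^sub>F s in at_right a. g s \<le> g b"
    using eventually_at_right_real[OF \<open>a < b\<close>] by (auto elim: eventually_mono)
  moreover have "(g \<longlongrightarrow> g a) (at_right a)"
    using cont_g \<open>a < b\<close>
    by (metis at_within_Icc_at_right atLeastAtMost_iff continuous_on_def order.refl less_imp_le)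
  ultimately have "g a \<le> g b" by (intro tendsto_upperbound) auto
  then show ?thesis by (simp add: g_def algebra_simps)
qed

lemma slope_le_if_left_increments_le:
  fixes f :: "real \<Rightarrow> real"
  assumes "a < b" and cont: "continuous_on {a..b} f"
    and loc: "\<forall>x\<in>{a<..<b}. \<forall>\<^sub>F h in at_right 0. f x - f (x - h) \<le> c * h"
  shows "f b - f a \<le> c * (b - a)"
proof -
  have "- c * (- a - - b) \<le> f (- (- a)) - f (- (- b))"
  proof (rule slope_ge_if_right_increments_ge[where f = "\<lambda>y. f (- y)"])
    show "continuous_on {- b..- a} (\<lambda>y. f (- y))"
      by (intro continuous_on_compose2[OF cont] continuous_intros) auto
    show "\<forall>x\<in>{- b<..<- a}. \<forall>\<^sub>F h in at_right 0. - c * h \<le> f (- (x + h)) - f (- x)"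
    proof
      fix x assume "x \<in> {- b<..<- a}"
      then have "\<forall>\<^sub>F h in at_right 0. f (- x) - f (- x - h) \<le> c * h" using loc by auto
      then show "\<forall>\<^sub>F h in at_right 0. - c * h \<le> f (- (x + h)) - f (- x)"
        by (auto elim!: eventually_mono)
    qed
  qed (use \<open>a < b\<close> in auto)
  then show ?thesis by (simp add: algebra_simps)
qed

definition dini_bracket :: "(real \<Rightarrow> real) \<Rightarrow> real \<Rightarrow> real \<Rightarrow> bool" where
  "dini_bracket f D x \<longleftrightarrow> (\<forall>e>0.
     (\<forall>\<^sub>F h in at_right 0. (D - e) * h \<le> f (x + h) - f x) \<and>
     (\<forall>\<^sub>F h in at_right 0. f x - f (x - h) \<le> (D + e) * h))"

lemma dini_bracket_add:
  assumes f: "dini_bracket f D x" and g: "dini_bracket g E x"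
  shows "dini_bracket (\<lambda>t. f t + g t) (D + E) x"
  unfolding dini_bracket_def
proof (intro allI impI conjI)
  fix e :: real assume "0 < e"
  then have "e / 2 > 0" by simp
  with f g have
    "\<forall>\<^sub>F h in at_right 0. (D - e / 2) * h \<le> f (x + h) - f x"
    "\<forall>\<^sub>F h in at_right 0. f x - f (x - h) \<le> (D + e / 2) * h"
    "\<forall>\<^sub>F h in at_right 0. (E - e / 2) * h \<le> g (x + h) - g x"
    "\<forall>\<^sub>F h in at_right 0. g x - g (x - h) \<le> (E + e / 2) * h"
    unfolding dini_bracket_def by blast+
  then show "\<forall>\<^sub>F h in at_right 0. (D + E - e) * h \<le> f (x + h) + g (x + h) - (f x + g x)"
    and "\<forall>\<^sub>F h in at_right 0. f x + g x - (f (x - h) + g (x - h)) \<le> (D + E + e) * h"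
    by (eventually_elim, simp add: algebra_simps)+
qed

lemma tendsto_slope_if_dini_bracket:
  fixes V m :: "real \<Rightarrow> real"
  assumes "0 < d" and cont: "continuous_on {0..d} V" and m: "(m \<longlongrightarrow> L) (at_right 0)"
    and bracket: "\<forall>\<^sub>F x in at_right 0. dini_bracket V (m x) x"
  shows "((\<lambda>t. (V t - V 0) / t) \<longlongrightarrow> L) (at_right 0)"
proof (rule tendstoI)
  fix r :: real assume "r > 0"
  then have "\<forall>\<^sub>F x in at_right 0. \<bar>m x - L\<bar> < r / 2 \<and> x < d \<and> dini_bracket V (m x) x"
    using tendstoD[OF m, of "r / 2"] eventually_at_right_real[OF \<open>0 < d\<close>] bracket
    by (auto elim!: eventually_elim2 simp: dist_real_def eventually_conj_iff)
  then obtain b where "b > 0"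
    and b: "\<And>x. 0 < x \<Longrightarrow> x < b \<Longrightarrow> \<bar>m x - L\<bar> < r / 2 \<and> x < d \<and> dini_bracket V (m x) x"
    unfolding eventually_at_right_field by auto
  have "dist ((V t - V 0) / t) L < r" if t: "0 < t" "t < b" for t
  proof -
    have cont_t: "continuous_on {0..t} V"
      by (rule continuous_on_subset[OF cont]) (use b[OF t] in auto)
    have near: "\<bar>m x - L\<bar> < r / 2" and "dini_bracket V (m x) x" if "x \<in> {0<..<t}" for x
      using b[of x] that t by auto
    then have incr: "(\<forall>\<^sub>F h in at_right 0. (m x - r / 4) * h \<le> V (x + h) - V x) \<and>
        (\<forall>\<^sub>F h in at_right 0. V x - V (x - h) \<le> (m x + r / 4) * h)" if "x \<in> {0<..<t}" for x
      using that \<open>r > 0\<close> unfolding dini_bracket_def by auto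
    have "(L - 3 * r / 4) * (t - 0) \<le> V t - V 0"
    proof (rule slope_ge_if_right_increments_ge[OF t(1) cont_t], intro ballI)
      fix x assume x: "x \<in> {0<..<t}"
      have "L - 3 * r / 4 \<le> m x - r / 4" using near[OF x] by linarith
      with conjunct1[OF incr[OF x]] eventually_at_right_less[of 0]
      show "\<forall>\<^sub>F h in at_right 0. (L - 3 * r / 4) * h \<le> V (x + h) - V x"
        by (auto elim!: eventually_elim2 intro: order_trans[rotated] mult_right_mono)
    qed
    moreover have "V t - V 0 \<le> (L + 3 * r / 4) * (t - 0)"
    proof (rule slope_le_if_left_increments_le[OF t(1) cont_t], intro ballI)
      fix x assume x: "x \<in> {0<..<t}"
      have "m x + r / 4 \<le> L + 3 * r / 4" using near[OF x] by linarith
      with conjunct2[OF incr[OF x]] eventually_at_right_less[of 0]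
      show "\<forall>\<^sub>F h in at_right 0. V x - V (x - h) \<le> (L + 3 * r / 4) * h"
        by (auto elim!: eventually_elim2 intro: order_trans mult_right_mono)
    qed
    moreover have "0 < r * t" using t \<open>r > 0\<close> by simp
    ultimately show ?thesis
      using t by (auto simp: dist_real_def abs_less_iff field_simps)
  qed
  then show "\<forall>\<^sub>F t in at_right 0. dist ((V t - V 0) / t) L < r"
    unfolding eventually_at_right_field using \<open>b > 0\<close> by blast
qed

lemma signed_increment_approx:
  fixes f :: "real \<Rightarrow> real"
  assumes "(f has_real_derivative D) (at a)" and "\<sigma> \<in> {-1, 1}" and "0 < e"
  shows "\<forall>\<^sub>F h in at_right 0. \<bar>f (a + \<sigma> * h) - f a - \<sigma> * D * h\<bar> \<le> e * h"
proof -
  have "\<forall>\<^sub>F h in at_right 0. \<sigma> * h \<noteq> 0"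
    using eventually_at_right_less[of 0] \<open>\<sigma> \<in> {-1, 1}\<close> by (auto elim: eventually_mono)
  then have "filterlim (\<lambda>h. \<sigma> * h) (at 0) (at_right 0)"
    by (intro filterlim_atI tendsto_mult_right_zero tendsto_ident_at)
  from filterlim_compose[OF assms(1)[unfolded DERIV_def] this]
  have "((\<lambda>h. (f (a + \<sigma> * h) - f a) / (\<sigma> * h)) \<longlongrightarrow> D) (at_right 0)" .
  from tendstoD[OF this \<open>0 < e\<close>] eventually_at_right_less[of 0]
  show ?thesis
  proof eventually_elim
    case (elim h)
    have "f (a + \<sigma> * h) - f a - \<sigma> * D * h = \<sigma> * h * ((f (a + \<sigma> * h) - f a) / (\<sigma> * h) - D)"
      using elim(2) \<open>\<sigma> \<in> {-1, 1}\<close> by (auto simp: field_simps)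
    also have "\<bar>\<dots>\<bar> = h * dist ((f (a + \<sigma> * h) - f a) / (\<sigma> * h)) D"
      using elim(2) \<open>\<sigma> \<in> {-1, 1}\<close> by (auto simp: abs_mult dist_real_def)
    finally show ?case
      using elim by (metis less_eq_real_def mult.commute mult_left_mono)
  qed
qed

lemma copula_boundary:
  assumes "copula C" and "u \<in> {0..1}"
  shows "C u 0 = 0" "C 0 u = 0" "C u 1 = u" "C 1 u = u"
  using assms unfolding copula_def by auto

lemma copula_volume_nonneg:
  assumes "copula C" and "u1 \<le> u2" "v1 \<le> v2"
    and "u1 \<in> {0..1}" "u2 \<in> {0..1}" "v1 \<in> {0..1}" "v2 \<in> {0..1}"
  shows "0 \<le> Cvol C u1 u2 v1 v2"
  using assms unfolding copula_def Cvol_def by blast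

lemma copula_volume_sign:
  assumes C: "copula C" and "u1 \<in> {0..1}" "u2 \<in> {0..1}" "v1 \<in> {0..1}" "v2 \<in> {0..1}"
  shows "0 \<le> (u2 - u1) * (v2 - v1) * Cvol C u1 u2 v1 v2"
proof -
  note vol = copula_volume_nonneg[OF C]
  have swap: "Cvol C u2 u1 v1 v2 = - Cvol C u1 u2 v1 v2" "Cvol C u1 u2 v2 v1 = - Cvol C u1 u2 v1 v2"
    "Cvol C u2 u1 v2 v1 = Cvol C u1 u2 v1 v2"
    by (simp_all add: Cvol_def)
  consider "u1 \<le> u2" "v1 \<le> v2" | "u2 \<le> u1" "v1 \<le> v2" | "u1 \<le> u2" "v2 \<le> v1" | "u2 \<le> u1" "v2 \<le> v1"
    by linarith
  then show ?thesis
  proof cases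
    case 1 then show ?thesis using vol[of u1 u2 v1 v2] assms by simp
  next
    case 2 then show ?thesis using vol[of u2 u1 v1 v2] assms swap
      by (simp add: mult_nonpos_nonpos mult_nonpos_nonneg)
  next
    case 3 then show ?thesis using vol[of u1 u2 v2 v1] assms swap
      by (simp add: mult_nonpos_nonpos mult_nonneg_nonpos)
  next
    case 4 then show ?thesis using vol[of u2 u1 v2 v1] assms swap
      by (simp add: mult_nonpos_nonpos)
  qed
qed

lemma copula_lipschitz:
  assumes C: "copula C" and "u1 \<in> {0..1}" "u2 \<in> {0..1}" "v1 \<in> {0..1}" "v2 \<in> {0..1}"
  shows "\<bar>C u1 v1 - C u2 v2\<bar> \<le> \<bar>u1 - u2\<bar> + \<bar>v1 - v2\<bar>"
proof -
  note vol = copula_volume_nonneg[OF C]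
  have u: "\<bar>C x v - C y v\<bar> \<le> \<bar>x - y\<bar>" if "x \<in> {0..1}" "y \<in> {0..1}" "v \<in> {0..1}" for x y v
    using vol[of x y 0 v] vol[of x y v 1] vol[of y x 0 v] vol[of y x v 1] that
    by (cases "x \<le> y") (auto simp: Cvol_def copula_boundary[OF C])
  have v: "\<bar>C u x - C u y\<bar> \<le> \<bar>x - y\<bar>" if "x \<in> {0..1}" "y \<in> {0..1}" "u \<in> {0..1}" for x y u
    using vol[of 0 u x y] vol[of u 1 x y] vol[of 0 u y x] vol[of u 1 y x] that
    by (cases "x \<le> y") (auto simp: Cvol_def copula_boundary[OF C])
  show ?thesis using u[of u1 u2 v1] v[of v1 v2 u2] assms by linarith
qed

lemma continuous_on_copula_line:
  assumes C: "copula C" and S: "\<forall>t\<in>S. a + \<alpha> * t \<in> {0..1} \<and> b + \<beta> * t \<in> {0..1}"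
  shows "continuous_on S (\<lambda>t. C (a + \<alpha> * t) (b + \<beta> * t))"
proof (rule lipschitz_on_continuous_on[OF lipschitz_onI])
  fix s t assume "s \<in> S" "t \<in> S"
  then have "\<bar>C (a + \<alpha> * s) (b + \<beta> * s) - C (a + \<alpha> * t) (b + \<beta> * t)\<bar>
      \<le> \<bar>(a + \<alpha> * s) - (a + \<alpha> * t)\<bar> + \<bar>(b + \<beta> * s) - (b + \<beta> * t)\<bar>"
    using S by (intro copula_lipschitz[OF C]) auto
  also have "\<dots> = \<bar>\<alpha> * (s - t)\<bar> + \<bar>\<beta> * (s - t)\<bar>"
    by (simp add: algebra_simps)
  finally show "dist (C (a + \<alpha> * s) (b + \<beta> * s)) (C (a + \<alpha> * t) (b + \<beta> * t))
      \<le> (\<bar>\<alpha>\<bar> + \<bar>\<beta>\<bar>) * dist s t"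
    by (simp add: dist_real_def abs_mult distrib_right)
qed simp

lemma copula_diagonal_increment:
  assumes C: "copula C" and A: "A \<in> {0<..<1}" and B: "B \<in> {0<..<1}" and "partials_exist C A B"
    and \<alpha>: "\<alpha> \<in> {-1, 1}" and \<beta>: "\<beta> \<in> {-1, 1}" and "0 < e"
  shows "\<forall>\<^sub>F h in at_right 0.
    (\<beta> * cd21 C B A + \<alpha> * cd12 C A B - e) * h \<le> \<alpha> * \<beta> * (C (A + \<alpha> * h) (B + \<beta> * h) - C A B)"
proof -
  have du: "((\<lambda>x. C x B) has_real_derivative cd21 C B A) (at A)"
    and dv: "((\<lambda>y. C A y) has_real_derivative cd12 C A B) (at B)"
    using \<open>partials_exist C A B\<close>
    unfolding partials_exist_def cd21_def cd12_def by (simp_all add: DERIV_deriv_iff_real_differentiable)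
  have "0 < min (min A (1 - A)) (min B (1 - B))" using A B by simp
  note near = eventually_at_right_real[OF this]
  have "0 < e / 2" using \<open>0 < e\<close> by simp
  from signed_increment_approx[OF du \<alpha> this] signed_increment_approx[OF dv \<beta> this] near
  show ?thesis
  proof eventually_elim
    case (elim h)
    have pts: "A + \<alpha> * h \<in> {0..1}" "B + \<beta> * h \<in> {0..1}" "A \<in> {0..1}" "B \<in> {0..1}"
      using elim(3) A B \<alpha> \<beta> by auto
    \<comment> \<open>2-increasingness on the rectangle spanned by \<open>(A, B)\<close> and \<open>(A + \<alpha> h, B + \<beta> h)\<close>
      reduces the diagonal increment to the two axis-parallel ones\<close>
    have "0 \<le> h\<^sup>2 * (\<alpha> * \<beta> * Cvol C A (A + \<alpha> * h) B (B + \<beta> * h))"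
      using copula_volume_sign[OF C pts(3,1,4,2)] by (simp add: power2_eq_square algebra_simps)
    then have "0 \<le> \<alpha> * \<beta> * Cvol C A (A + \<alpha> * h) B (B + \<beta> * h)"
      using elim(3) by (simp add: zero_le_mult_iff)
    with elim(1,2) \<alpha> \<beta> show ?case
      unfolding Cvol_def abs_le_iff by (auto simp: algebra_simps)
  qed
qed

lemma dini_bracket_copula_diagonal:
  assumes C: "copula C" and \<alpha>: "\<alpha> \<in> {-1, 1}" and \<beta>: "\<beta> \<in> {-1, 1}"
    and A: "a + \<alpha> * x \<in> {0<..<1}" and B: "b + \<beta> * x \<in> {0<..<1}"
    and pe: "partials_exist C (a + \<alpha> * x) (b + \<beta> * x)"
  shows "dini_bracket (\<lambda>t. \<alpha> * \<beta> * C (a + \<alpha> * t) (b + \<beta> * t))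
           (\<beta> * cd21 C (b + \<beta> * x) (a + \<alpha> * x) + \<alpha> * cd12 C (a + \<alpha> * x) (b + \<beta> * x)) x"
  unfolding dini_bracket_def
proof (intro allI impI conjI)
  fix e :: real assume "0 < e"
  have "- \<alpha> \<in> {-1, 1}" "- \<beta> \<in> {-1, 1}" using \<alpha> \<beta> by auto
  note incr = copula_diagonal_increment[OF C A B pe]
  from incr[OF \<alpha> \<beta> \<open>0 < e\<close>]
  show "\<forall>\<^sub>F h in at_right 0. (\<beta> * cd21 C (b + \<beta> * x) (a + \<alpha> * x) + \<alpha> * cd12 C (a + \<alpha> * x) (b + \<beta> * x) - e) * h
      \<le> \<alpha> * \<beta> * C (a + \<alpha> * (x + h)) (b + \<beta> * (x + h)) - \<alpha> * \<beta> * C (a + \<alpha> * x) (b + \<beta> * x)"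
    by (auto elim!: eventually_mono simp: algebra_simps)
  from incr[OF \<open>- \<alpha> \<in> {-1, 1}\<close> \<open>- \<beta> \<in> {-1, 1}\<close> \<open>0 < e\<close>]
  show "\<forall>\<^sub>F h in at_right 0. \<alpha> * \<beta> * C (a + \<alpha> * x) (b + \<beta> * x) - \<alpha> * \<beta> * C (a + \<alpha> * (x - h)) (b + \<beta> * (x - h))
      \<le> (\<beta> * cd21 C (b + \<beta> * x) (a + \<alpha> * x) + \<alpha> * cd12 C (a + \<alpha> * x) (b + \<beta> * x) + e) * h"
    by (auto elim!: eventually_mono simp: algebra_simps)
qed

section \<open>Sums along diagonal segments\<close>

text \<open>An entry \<open>(a, b, \<alpha>, \<beta>)\<close> with \<open>\<alpha>, \<beta> \<in> {-1, 1}\<close> stands for the diagonal segment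
  \<open>t \<mapsto> (a + \<alpha> t, b + \<beta> t)\<close>, weighted by the sign \<open>\<alpha> \<beta>\<close>: with this weight 2-increasingness bounds
  its increments from below, and \<open>diagonal_slope\<close> is the derivative the partials suggest.\<close>
definition diagonal_sum :: "(real \<Rightarrow> real \<Rightarrow> real) \<Rightarrow> (real \<times> real \<times> real \<times> real) list \<Rightarrow> real \<Rightarrow> real" where
  "diagonal_sum C ps t = (\<Sum>(a, b, \<alpha>, \<beta>)\<leftarrow>ps. \<alpha> * \<beta> * C (a + \<alpha> * t) (b + \<beta> * t))"

definition diagonal_slope :: "(real \<Rightarrow> real \<Rightarrow> real) \<Rightarrow> (real \<times> real \<times> real \<times> real) list \<Rightarrow> real \<Rightarrow> real" where
  "diagonal_slope C ps t =
     (\<Sum>(a, b, \<alpha>, \<beta>)\<leftarrow>ps. \<beta> * cd21 C (b + \<beta> * t) (a + \<alpha> * t) + \<alpha> * cd12 C (a + \<alpha> * t) (b + \<beta> * t))"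

lemma continuous_on_diagonal_sum:
  assumes "copula C" and "\<forall>t\<in>S. \<forall>(a, b, \<alpha>, \<beta>)\<in>set ps. a + \<alpha> * t \<in> {0..1} \<and> b + \<beta> * t \<in> {0..1}"
  shows "continuous_on S (diagonal_sum C ps)"
  using assms(2)
proof (induction ps)
  case Nil
  then show ?case by (simp add: diagonal_sum_def)
next
  case (Cons p ps)
  obtain a b \<alpha> \<beta> where p: "p = (a, b, \<alpha>, \<beta>)" by (cases p) auto
  have "continuous_on S (\<lambda>t. \<alpha> * \<beta> * C (a + \<alpha> * t) (b + \<beta> * t) + diagonal_sum C ps t)"
    using Cons unfolding p
    by (intro continuous_intros continuous_on_copula_line[OF \<open>copula C\<close>]) auto
  then show ?case by (simp add: p diagonal_sum_def)
qed

lemma dini_bracket_diagonal_sum: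
  assumes "copula C"
    and "\<forall>(a, b, \<alpha>, \<beta>)\<in>set ps. \<alpha> \<in> {-1, 1} \<and> \<beta> \<in> {-1, 1} \<and>
           a + \<alpha> * x \<in> {0<..<1} \<and> b + \<beta> * x \<in> {0<..<1} \<and> partials_exist C (a + \<alpha> * x) (b + \<beta> * x)"
  shows "dini_bracket (diagonal_sum C ps) (diagonal_slope C ps x) x"
  using assms(2)
proof (induction ps)
  case Nil
  have "\<forall>\<^sub>F h in at_right 0. - e * h \<le> 0" if "0 < e" for e :: real
    using eventually_at_right_less[of 0] that by (auto elim: eventually_mono)
  then show ?case by (simp add: dini_bracket_def diagonal_sum_def diagonal_slope_def)
next
  case (Cons p ps)
  obtain a b \<alpha> \<beta> where p: "p = (a, b, \<alpha>, \<beta>)" by (cases p) auto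
  have "dini_bracket (\<lambda>t. \<alpha> * \<beta> * C (a + \<alpha> * t) (b + \<beta> * t) + diagonal_sum C ps t)
      (\<beta> * cd21 C (b + \<beta> * x) (a + \<alpha> * x) + \<alpha> * cd12 C (a + \<alpha> * x) (b + \<beta> * x) + diagonal_slope C ps x) x"
    using Cons unfolding p by (intro dini_bracket_add dini_bracket_copula_diagonal[OF \<open>copula C\<close>]) auto
  then show ?case by (simp add: p diagonal_sum_def diagonal_slope_def)
qed

lemma tendsto_diagonal_sum_quotient:
  assumes C: "copula C" and "0 < d"
    and start: "\<forall>(a, b, \<alpha>, \<beta>)\<in>set ps. \<alpha> \<in> {-1, 1} \<and> \<beta> \<in> {-1, 1} \<and> a \<in> {0..1} \<and> b \<in> {0..1}"
    and inside: "\<forall>t\<in>{0<..<d}. \<forall>(a, b, \<alpha>, \<beta>)\<in>set ps. a + \<alpha> * t \<in> {0<..<1} \<and> b + \<beta> * t \<in> {0<..<1}"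
    and partials: "\<forall>\<^sub>F t in at_right 0. \<forall>(a, b, \<alpha>, \<beta>)\<in>set ps. partials_exist C (a + \<alpha> * t) (b + \<beta> * t)"
    and slope: "(diagonal_slope C ps \<longlongrightarrow> L) (at_right 0)"
  shows "((\<lambda>t. (diagonal_sum C ps t - diagonal_sum C ps 0) / t) \<longlongrightarrow> L) (at_right 0)"
proof (rule tendsto_slope_if_dini_bracket[OF _ _ slope])
  show "0 < d / 2" using \<open>0 < d\<close> by simp
  have "\<forall>t\<in>{0..d / 2}. \<forall>(a, b, \<alpha>, \<beta>)\<in>set ps. a + \<alpha> * t \<in> {0..1} \<and> b + \<beta> * t \<in> {0..1}"
  proof (rule ballI)
    fix t assume "t \<in> {0..d / 2}"
    then consider "t = 0" | "t \<in> {0<..<d}" using \<open>0 < d\<close> by fastforce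
    then show "\<forall>(a, b, \<alpha>, \<beta>)\<in>set ps. a + \<alpha> * t \<in> {0..1} \<and> b + \<beta> * t \<in> {0..1}"
      by cases (use start inside in fastforce)+
  qed
  then show "continuous_on {0..d / 2} (diagonal_sum C ps)"
    by (rule continuous_on_diagonal_sum[OF C])
  show "\<forall>\<^sub>F x in at_right 0. dini_bracket (diagonal_sum C ps) (diagonal_slope C ps x) x"
    using partials eventually_at_right_real[OF \<open>0 < d\<close>]
  proof eventually_elim
    case (elim x)
    then show ?case using start inside by (intro dini_bracket_diagonal_sum[OF C]) fastforce
  qed
qed

section \<open>Quantile dependence coefficients\<close>

lemma pospart_eq_self: "0 \<le> a \<Longrightarrow> pospart a = a"
  and pospart_eq_0: "a \<le> 0 \<Longrightarrow> pospart a = 0"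
  and negpart_eq_self: "a \<le> 1 \<Longrightarrow> negpart a = a"
  and negpart_eq_1: "1 \<le> a \<Longrightarrow> negpart a = 1"
  by (auto simp: pospart_def negpart_def)

lemma qdc_isI:
  assumes "\<forall>\<^sub>F t in at_right 0. qd_ratio C q p t = c + k * f t"
    and "(f \<longlongrightarrow> L) (at_right 0)" and "M = c + k * L"
  shows "qdc_is C q p M"
  unfolding qdc_is_def \<open>M = c + k * L\<close>
  using assms(2) by (intro tendsto_eq_intros tendsto_cong[OF assms(1), THEN iffD2]) auto

lemma qdc_is_interior:
  assumes C: "copula C" and p: "0 < p" "p < 1" and q: "0 < q" "q < 1"
    and pe: "\<forall>\<^sub>F t in at_right 0. partials_exist C (p+t) (q+t) \<and> partials_exist C (p+t) (q-t) \<and>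
                            partials_exist C (p-t) (q+t) \<and> partials_exist C (p-t) (q-t)"
    and lim: "((\<lambda>t. cd21 C (q+t) (p+t) - cd21 C (q-t) (p+t) + cd21 C (q+t) (p-t) - cd21 C (q-t) (p-t)
           + cd12 C (p+t) (q+t) - cd12 C (p-t) (q+t) + cd12 C (p+t) (q-t) - cd12 C (p-t) (q-t))
         \<longlongrightarrow> L) (at_right 0)"
  shows "qdc_is C q p (L / 2)"
proof -
  define ps :: "(real \<times> real \<times> real \<times> real) list"
    where "ps = [(p, q, 1, 1), (p, q, 1, -1), (p, q, -1, 1), (p, q, -1, -1)]"
  define d where "d = min (min p (1 - p)) (min q (1 - q))"
  have "0 < d" using p q by (simp add: d_def)
  have quotient: "((\<lambda>t. (diagonal_sum C ps t - diagonal_sum C ps 0) / t) \<longlongrightarrow> L) (at_right 0)"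
  proof (rule tendsto_diagonal_sum_quotient[OF C \<open>0 < d\<close>])
    show "(diagonal_slope C ps \<longlongrightarrow> L) (at_right 0)"
      using lim by (simp add: ps_def diagonal_slope_def[abs_def] algebra_simps)
  qed (use p q pe in \<open>auto simp: ps_def d_def\<close>)
  have "\<forall>\<^sub>F t in at_right 0.
      qd_ratio C q p t = 0 + 1 / 2 * ((diagonal_sum C ps t - diagonal_sum C ps 0) / t)"
    using eventually_at_right_real[OF \<open>0 < d\<close>]
    by eventually_elim
      (auto simp: d_def ps_def qd_ratio_def Cvol_def diagonal_sum_def pospart_eq_self negpart_eq_self field_simps)
  from qdc_isI[OF this quotient] show ?thesis by simp
qed

lemma qdc_is_bottom_edge:
  assumes C: "copula C" and p: "0 < p" "p < 1"
    and pe: "\<forall>\<^sub>F t in at_right 0. partials_exist C (p+t) t \<and> partials_exist C (p-t) t"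
    and lim: "((\<lambda>t. cd21 C t (p+t) + cd21 C t (p-t) + cd12 C (p+t) t - cd12 C (p-t) t) \<longlongrightarrow> L) (at_right 0)"
  shows "qdc_is C 0 p (L / 2)"
proof -
  define ps :: "(real \<times> real \<times> real \<times> real) list" where "ps = [(p, 0, 1, 1), (p, 0, -1, 1)]"
  define d where "d = min p (1 - p)"
  have "0 < d" using p by (simp add: d_def)
  have quotient: "((\<lambda>t. (diagonal_sum C ps t - diagonal_sum C ps 0) / t) \<longlongrightarrow> L) (at_right 0)"
  proof (rule tendsto_diagonal_sum_quotient[OF C \<open>0 < d\<close>])
    show "(diagonal_slope C ps \<longlongrightarrow> L) (at_right 0)"
      using lim by (simp add: ps_def diagonal_slope_def[abs_def] algebra_simps)
  qed (use p pe in \<open>auto simp: ps_def d_def\<close>)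
  have "\<forall>\<^sub>F t in at_right 0.
      qd_ratio C 0 p t = 0 + 1 / 2 * ((diagonal_sum C ps t - diagonal_sum C ps 0) / t)"
    using eventually_at_right_real[OF \<open>0 < d\<close>]
    by eventually_elim
      (auto simp: d_def ps_def qd_ratio_def Cvol_def diagonal_sum_def copula_boundary[OF C]
        pospart_eq_self pospart_eq_0 negpart_eq_self field_simps)
  from qdc_isI[OF this quotient] show ?thesis by simp
qed

lemma qdc_is_top_edge:
  assumes C: "copula C" and p: "0 < p" "p < 1"
    and pe: "\<forall>\<^sub>F t in at_right 0. partials_exist C (p+t) (1-t) \<and> partials_exist C (p-t) (1-t)"
    and lim: "((\<lambda>t. cd21 C (1-t) (p+t) + cd21 C (1-t) (p-t) - cd12 C (p+t) (1-t) + cd12 C (p-t) (1-t))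
         \<longlongrightarrow> L) (at_right 0)"
  shows "qdc_is C 1 p (1 - L / 2)"
proof -
  define ps :: "(real \<times> real \<times> real \<times> real) list" where "ps = [(p, 1, 1, -1), (p, 1, -1, -1)]"
  define d where "d = min p (1 - p)"
  have "0 < d" using p by (simp add: d_def)
  have quotient: "((\<lambda>t. (diagonal_sum C ps t - diagonal_sum C ps 0) / t) \<longlongrightarrow> - L) (at_right 0)"
  proof (rule tendsto_diagonal_sum_quotient[OF C \<open>0 < d\<close>])
    show "(diagonal_slope C ps \<longlongrightarrow> - L) (at_right 0)"
      using tendsto_minus[OF lim] by (simp add: ps_def diagonal_slope_def[abs_def] algebra_simps)
  qed (use p pe in \<open>auto simp: ps_def d_def\<close>)
  have "\<forall>\<^sub>F t in at_right 0.
      qd_ratio C 1 p t = 1 + 1 / 2 * ((diagonal_sum C ps t - diagonal_sum C ps 0) / t)"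
    using eventually_at_right_real[OF \<open>0 < d\<close>]
    by eventually_elim
      (auto simp: d_def ps_def qd_ratio_def Cvol_def diagonal_sum_def copula_boundary[OF C]
        pospart_eq_self negpart_eq_self negpart_eq_1 field_simps)
  from qdc_isI[OF this quotient] show ?thesis by simp
qed

lemma qdc_is_left_edge:
  assumes C: "copula C" and q: "0 < q" "q < 1"
    and pe: "\<forall>\<^sub>F t in at_right 0. partials_exist C t (q+t) \<and> partials_exist C t (q-t)"
    and lim: "((\<lambda>t. cd21 C (q+t) t - cd21 C (q-t) t + cd12 C t (q+t) + cd12 C t (q-t)) \<longlongrightarrow> L) (at_right 0)"
  shows "qdc_is C q 0 L"
proof -
  define ps :: "(real \<times> real \<times> real \<times> real) list" where "ps = [(0, q, 1, 1), (0, q, 1, -1)]"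
  define d where "d = min q (1 - q)"
  have "0 < d" using q by (simp add: d_def)
  have quotient: "((\<lambda>t. (diagonal_sum C ps t - diagonal_sum C ps 0) / t) \<longlongrightarrow> L) (at_right 0)"
  proof (rule tendsto_diagonal_sum_quotient[OF C \<open>0 < d\<close>])
    show "(diagonal_slope C ps \<longlongrightarrow> L) (at_right 0)"
      using lim by (simp add: ps_def diagonal_slope_def[abs_def] algebra_simps)
  qed (use q pe in \<open>auto simp: ps_def d_def\<close>)
  have "\<forall>\<^sub>F t in at_right 0.
      qd_ratio C q 0 t = 0 + 1 * ((diagonal_sum C ps t - diagonal_sum C ps 0) / t)"
    using eventually_at_right_real[OF \<open>0 < d\<close>]
    by eventually_elim
      (auto simp: d_def ps_def qd_ratio_def Cvol_def diagonal_sum_def copula_boundary[OF C]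
        pospart_eq_self pospart_eq_0 negpart_eq_self field_simps)
  from qdc_isI[OF this quotient] show ?thesis by simp
qed

lemma qdc_is_right_edge:
  assumes C: "copula C" and q: "0 < q" "q < 1"
    and pe: "\<forall>\<^sub>F t in at_right 0. partials_exist C (1-t) (q+t) \<and> partials_exist C (1-t) (q-t)"
    and lim: "((\<lambda>t. cd12 C (1-t) (q+t) + cd12 C (1-t) (q-t) - cd21 C (q+t) (1-t) + cd21 C (q-t) (1-t))
         \<longlongrightarrow> L) (at_right 0)"
  shows "qdc_is C q 1 (2 - L)"
proof -
  define ps :: "(real \<times> real \<times> real \<times> real) list" where "ps = [(1, q, -1, 1), (1, q, -1, -1)]"
  define d where "d = min q (1 - q)"
  have "0 < d" using q by (simp add: d_def)
  have quotient: "((\<lambda>t. (diagonal_sum C ps t - diagonal_sum C ps 0) / t) \<longlongrightarrow> - L) (at_right 0)"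
  proof (rule tendsto_diagonal_sum_quotient[OF C \<open>0 < d\<close>])
    show "(diagonal_slope C ps \<longlongrightarrow> - L) (at_right 0)"
      using tendsto_minus[OF lim] by (simp add: ps_def diagonal_slope_def[abs_def] algebra_simps)
  qed (use q pe in \<open>auto simp: ps_def d_def\<close>)
  have "\<forall>\<^sub>F t in at_right 0.
      qd_ratio C q 1 t = 2 + 1 * ((diagonal_sum C ps t - diagonal_sum C ps 0) / t)"
    using eventually_at_right_real[OF \<open>0 < d\<close>]
    by eventually_elim
      (auto simp: d_def ps_def qd_ratio_def Cvol_def diagonal_sum_def copula_boundary[OF C]
        pospart_eq_self negpart_eq_self negpart_eq_1 field_simps)
  from qdc_isI[OF this quotient] show ?thesis by simp
qed

lemma qdc_is_top_left_corner:
  assumes C: "copula C"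
    and pe: "\<forall>\<^sub>F t in at_right 0. partials_exist C t (1-t)"
    and lim: "((\<lambda>t. cd21 C (1-t) t - cd12 C t (1-t)) \<longlongrightarrow> L) (at_right 0)"
  shows "qdc_is C 1 0 (1 - L)"
proof -
  define ps :: "(real \<times> real \<times> real \<times> real) list" where "ps = [(0, 1, 1, -1)]"
  have quotient: "((\<lambda>t. (diagonal_sum C ps t - diagonal_sum C ps 0) / t) \<longlongrightarrow> - L) (at_right 0)"
  proof (rule tendsto_diagonal_sum_quotient[OF C zero_less_one])
    show "(diagonal_slope C ps \<longlongrightarrow> - L) (at_right 0)"
      using tendsto_minus[OF lim] by (simp add: ps_def diagonal_slope_def[abs_def] algebra_simps)
  qed (use pe in \<open>auto simp: ps_def\<close>)
  have "\<forall>\<^sub>F t in at_right 0.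
      qd_ratio C 1 0 t = 1 + 1 * ((diagonal_sum C ps t - diagonal_sum C ps 0) / t)"
    using eventually_at_right_real[OF zero_less_one]
    by eventually_elim
      (auto simp: ps_def qd_ratio_def Cvol_def diagonal_sum_def copula_boundary[OF C]
        pospart_eq_self pospart_eq_0 negpart_eq_self negpart_eq_1 field_simps)
  from qdc_isI[OF this quotient] show ?thesis by simp
qed

lemma qdc_is_bottom_right_corner:
  assumes C: "copula C"
    and pe: "\<forall>\<^sub>F t in at_right 0. partials_exist C (1-t) t"
    and lim: "((\<lambda>t. cd12 C (1-t) t - cd21 C t (1-t)) \<longlongrightarrow> L) (at_right 0)"
  shows "qdc_is C 0 1 (1 - L)"
proof -
  define ps :: "(real \<times> real \<times> real \<times> real) list" where "ps = [(1, 0, -1, 1)]"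
  have quotient: "((\<lambda>t. (diagonal_sum C ps t - diagonal_sum C ps 0) / t) \<longlongrightarrow> - L) (at_right 0)"
  proof (rule tendsto_diagonal_sum_quotient[OF C zero_less_one])
    show "(diagonal_slope C ps \<longlongrightarrow> - L) (at_right 0)"
      using tendsto_minus[OF lim] by (simp add: ps_def diagonal_slope_def[abs_def] algebra_simps)
  qed (use pe in \<open>auto simp: ps_def\<close>)
  have "\<forall>\<^sub>F t in at_right 0.
      qd_ratio C 0 1 t = 1 + 1 * ((diagonal_sum C ps t - diagonal_sum C ps 0) / t)"
    using eventually_at_right_real[OF zero_less_one]
    by eventually_elim
      (auto simp: ps_def qd_ratio_def Cvol_def diagonal_sum_def copula_boundary[OF C]
        pospart_eq_self pospart_eq_0 negpart_eq_self negpart_eq_1 field_simps)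
  from qdc_isI[OF this quotient] show ?thesis by simp
qed

theorem corollary2:
  fixes C :: "real \<Rightarrow> real \<Rightarrow> real"
  assumes "copula C"
  shows
  "(\<forall>p q L. 0 < p \<and> p < 1 \<and> 0 < q \<and> q < 1 \<and>
      (\<forall>\<^sub>F t in at_right 0. partials_exist C (p+t) (q+t) \<and> partials_exist C (p+t) (q-t) \<and>
                            partials_exist C (p-t) (q+t) \<and> partials_exist C (p-t) (q-t)) \<and>
      ((\<lambda>t. cd21 C (q+t) (p+t) - cd21 C (q-t) (p+t) + cd21 C (q+t) (p-t) - cd21 C (q-t) (p-t)
           + cd12 C (p+t) (q+t) - cd12 C (p-t) (q+t) + cd12 C (p+t) (q-t) - cd12 C (p-t) (q-t))
         \<longlongrightarrow> L) (at_right 0)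
      \<longrightarrow> qdc_is C q p (L / 2))
 \<and> (\<forall>p L. 0 < p \<and> p < 1 \<and>
      (\<forall>\<^sub>F t in at_right 0. partials_exist C (p+t) t \<and> partials_exist C (p-t) t) \<and>
      ((\<lambda>t. cd21 C t (p+t) + cd21 C t (p-t) + cd12 C (p+t) t - cd12 C (p-t) t) \<longlongrightarrow> L) (at_right 0)
      \<longrightarrow> qdc_is C 0 p (L / 2))
 \<and> (\<forall>p L. 0 < p \<and> p < 1 \<and>
      (\<forall>\<^sub>F t in at_right 0. partials_exist C (p+t) (1-t) \<and> partials_exist C (p-t) (1-t)) \<and>
      ((\<lambda>t. cd21 C (1-t) (p+t) + cd21 C (1-t) (p-t) - cd12 C (p+t) (1-t) + cd12 C (p-t) (1-t))
         \<longlongrightarrow> L) (at_right 0)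
      \<longrightarrow> qdc_is C 1 p (1 - L / 2))
 \<and> (\<forall>q L. 0 < q \<and> q < 1 \<and>
      (\<forall>\<^sub>F t in at_right 0. partials_exist C t (q+t) \<and> partials_exist C t (q-t)) \<and>
      ((\<lambda>t. cd21 C (q+t) t - cd21 C (q-t) t + cd12 C t (q+t) + cd12 C t (q-t)) \<longlongrightarrow> L) (at_right 0)
      \<longrightarrow> qdc_is C q 0 L)
 \<and> (\<forall>q L. 0 < q \<and> q < 1 \<and>
      (\<forall>\<^sub>F t in at_right 0. partials_exist C (1-t) (q+t) \<and> partials_exist C (1-t) (q-t)) \<and>
      ((\<lambda>t. cd12 C (1-t) (q+t) + cd12 C (1-t) (q-t) - cd21 C (q+t) (1-t) + cd21 C (q-t) (1-t))
         \<longlongrightarrow> L) (at_right 0)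
      \<longrightarrow> qdc_is C q 1 (2 - L))
 \<and> (\<forall>L. (\<forall>\<^sub>F t in at_right 0. partials_exist C t (1-t)) \<and>
      ((\<lambda>t. cd21 C (1-t) t - cd12 C t (1-t)) \<longlongrightarrow> L) (at_right 0)
      \<longrightarrow> qdc_is C 1 0 (1 - L))
 \<and> (\<forall>L. (\<forall>\<^sub>F t in at_right 0. partials_exist C (1-t) t) \<and>
      ((\<lambda>t. cd12 C (1-t) t - cd21 C t (1-t)) \<longlongrightarrow> L) (at_right 0)
      \<longrightarrow> qdc_is C 0 1 (1 - L))"
  by (intro conjI allI impI; elim conjE;
      rule qdc_is_interior[OF assms] qdc_is_bottom_edge[OF assms] qdc_is_top_edge[OF assms]
        qdc_is_left_edge[OF assms] qdc_is_right_edge[OF assms]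
        qdc_is_top_left_corner[OF assms] qdc_is_bottom_right_corner[OF assms];
      assumption)

end
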